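(* Let $\mathbb{K}$ be a field of characteristic zero and let $\mathbb{K}(x)[S_x]$ be the ring of linear recurrence operators, in which $S_x\, a(x) = a(x+1)\, S_x$ for $a\in\mathbb{K}(x)$. Let $m$ be a positive integer and let $L\in\mathbb{K}(x)[S_x]$ be nonzero, with $m$-exponent separation $L=L_0+L_1+\cdots+L_{m-1}$, where $L_i=\sum_{j=0}^{r_i}\ell_{i,j}S_x^{jm+i}$ with $\ell_{i,j}\in\mathbb{K}(x)$. Let $\mathcal{L}_m$ be the $m\times m$ matrix over $\mathbb{K}(x)[S_x]$ whose entry in row $i$ and column $j$ ($0\le i,j\le m-1$) is $L_{(i-j)\bmod m}$. Suppose $T_0,\ldots,T_{m-1}\in\mathbb{K}(x)[S_x]$ satisfy $[T_0,\ldots,T_{m-1}]\cdot\mathcal{L}_m=0$, i.e. $\sum_{i=0}^{m-1}T_i L_{(i-j)\bmod m}=0$ for every $j=0,\ldots,m-1$. Then $T_k=0$ for every $k=0,\ldots,m-1$.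
   Context: Products of operators are taken in the noncommutative ring $\mathbb{K}(x)[S_x]$, with row-vector entries multiplied on the left. *)

theory Defs
  imports "HOL-Computational_Algebra.Polynomial" "HOL-Computational_Algebra.Fraction_Field"
begin

text \<open>The rational function field K(x) is modelled as 'k poly fract.
  The shift automorphism sigma: a(x) maps to a(x+1).\<close>

definition rshift :: "'k::field poly fract \<Rightarrow> 'k poly fract" where
  "rshift f = (SOME g. \<exists>a b. b \<noteq> 0 \<and> f = Fract a b \<and>
       g = Fract (pcompose a [:1, 1:]) (pcompose b [:1, 1:]))"

text \<open>Recurrence operators in K(x)[S_x] are represented as polynomials in S_x
  with coefficients in K(x) (coeff i = coefficient of S_x^i, written on the left).
  Ore multiplication: (a S^i)(b S^j) = a sigma^i(b) S^(i+j).\<close>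

definition ore_mult :: "'k::field poly fract poly \<Rightarrow> 'k poly fract poly \<Rightarrow> 'k poly fract poly" where
  "ore_mult P Q = (\<Sum>i\<le>degree P. smult (coeff P i) (monom 1 i * map_poly (rshift ^^ i) Q))"

definition exp_part :: "nat \<Rightarrow> nat \<Rightarrow> 'k::field poly fract poly \<Rightarrow> 'k poly fract poly" where
  "exp_part m i L = Abs_poly (\<lambda>k. if k mod m = i then coeff L k else 0)"

end

theory Submission
  imports Defs
begin

text \<open>For each s let A_s be the operator whose coefficient of S^i is the coefficient of
  S^i in T_((s - i) mod m), i.e. the sum over t of the exponent class (s - t) mod m of T_t.
  The coefficient of S^n in A_s L equals the coefficient of S^n in the j-th entry of
  [T_0, ..., T_(m-1)] times the matrix, for j = (s - n) mod m; hence A_s L = 0. The Ore ring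
  has no zero divisors (the leading coefficient of P Q is that of P times sigma^(deg P) of
  that of Q), so A_s = 0 for every s, and T_k is read off from the A_(k+i).\<close>

lemma rshift_eq_0_iff [simp]:
  fixes f :: "'k::field poly fract"
  shows "rshift f = 0 \<longleftrightarrow> f = 0"
proof -
  have Fract_eq_0_iff: "b \<noteq> 0 \<Longrightarrow> Fract a b = 0 \<longleftrightarrow> a = 0" for a b :: "'k poly"
    by (simp add: Zero_fract_def eq_fract)
  have shift_eq_0_iff: "pcompose p [:1, 1:] = 0 \<longleftrightarrow> p = 0" for p :: "'k poly"
    by (simp add: pcompose_eq_0_iff)
  let ?P = "\<lambda>g. \<exists>a b. b \<noteq> 0 \<and> f = Fract a b \<and> g = Fract (pcompose a [:1, 1:]) (pcompose b [:1, 1:])"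
  obtain a b where "f = Fract a b" "b \<noteq> 0" by (cases f)
  then have "\<exists>g. ?P g" by blast
  then have "?P (rshift f)" unfolding rshift_def by (rule someI_ex)
  then obtain a b where "b \<noteq> 0" "f = Fract a b"
    "rshift f = Fract (pcompose a [:1, 1:]) (pcompose b [:1, 1:])"
    by blast
  then show ?thesis by (simp add: Fract_eq_0_iff shift_eq_0_iff)
qed

lemma funpow_rshift_eq_0_iff [simp]:
  fixes f :: "'k::field poly fract"
  shows "(rshift ^^ i) f = 0 \<longleftrightarrow> f = 0"
  by (induction i) simp_all

lemma coeff_ore_mult:
  "coeff (ore_mult P Q) n = (\<Sum>i\<le>n. coeff P i * (rshift ^^ i) (coeff Q (n - i)))"
proof -
  define g where "g i = (if n < i then 0 else coeff P i * (rshift ^^ i) (coeff Q (n - i)))" for i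
  have "coeff (ore_mult P Q) n = (\<Sum>i\<le>degree P. g i)"
    unfolding ore_mult_def g_def coeff_sum
    by (intro sum.cong refl) (simp add: coeff_monom_mult coeff_map_poly)
  also have "\<dots> = (\<Sum>i\<le>max (degree P) n. g i)"
    by (rule sum.mono_neutral_left) (auto simp: g_def coeff_eq_0)
  also have "\<dots> = (\<Sum>i\<le>n. g i)"
    by (rule sum.mono_neutral_right) (auto simp: g_def)
  finally show ?thesis by (simp add: g_def)
qed

lemma coeff_ore_mult_degree_sum:
  "coeff (ore_mult P Q) (degree P + degree Q) = lead_coeff P * (rshift ^^ degree P) (lead_coeff Q)"
proof -
  have "coeff (ore_mult P Q) (degree P + degree Q)
      = (\<Sum>i\<in>{degree P}. coeff P i * (rshift ^^ i) (coeff Q (degree P + degree Q - i)))"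
    unfolding coeff_ore_mult
  proof (rule sum.mono_neutral_right)
    show "\<forall>i\<in>{..degree P + degree Q} - {degree P}.
        coeff P i * (rshift ^^ i) (coeff Q (degree P + degree Q - i)) = 0"
      by (auto simp: coeff_eq_0 less_Suc_eq_le[symmetric] nat_neq_iff)
  qed auto
  then show ?thesis by simp
qed

lemma ore_mult_neq_0:
  assumes "P \<noteq> 0" "Q \<noteq> 0"
  shows "ore_mult P Q \<noteq> 0"
proof
  assume "ore_mult P Q = 0"
  then have "lead_coeff P * (rshift ^^ degree P) (lead_coeff Q) = 0"
    by (metis coeff_0 coeff_ore_mult_degree_sum)
  with assms show False by simp
qed

lemma coeff_exp_part:
  "coeff (exp_part m b L) k = (if k mod m = b then coeff L k else 0)"
proof -
  have "\<forall>\<^sub>\<infinity> k. (if k mod m = b then coeff L k else 0) = 0"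
    using MOST_coeff_eq_0[of L] by (auto elim: MOST_mono)
  then show ?thesis unfolding exp_part_def by (simp add: Abs_poly_inverse)
qed

lemma eq_nat_mod_iff_dvd:
  "t < m \<Longrightarrow> t = nat (x mod int m) \<longleftrightarrow> int m dvd int t - x"
  by (auto simp: mod_eq_dvd_iff[symmetric])

definition diagonal_sum :: "nat \<Rightarrow> nat \<Rightarrow> (nat \<Rightarrow> 'k::field poly fract poly) \<Rightarrow> 'k poly fract poly" where
  "diagonal_sum m s T = (\<Sum>t<m. exp_part m (nat ((int s - int t) mod int m)) (T t))"

lemma coeff_diagonal_sum:
  assumes "m > 0"
  shows "coeff (diagonal_sum m s T) i = coeff (T (nat ((int s - int i) mod int m))) i"
proof -
  have "i mod m = nat ((int s - int t) mod int m) \<longleftrightarrow> t = nat ((int s - int i) mod int m)"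
    if "t < m" for t
  proof -
    have "i mod m = nat ((int s - int t) mod int m) \<longleftrightarrow> int m dvd int (i mod m) - (int s - int t)"
      using assms by (simp add: eq_nat_mod_iff_dvd)
    also have "\<dots> \<longleftrightarrow> int m dvd int i - (int s - int t)"
      by (simp only: of_nat_mod mod_eq_dvd_iff[symmetric] mod_mod_trivial)
    also have "\<dots> \<longleftrightarrow> int m dvd int t - (int s - int i)"
      by (smt (verit) dvd_minus_iff)
    also have "\<dots> \<longleftrightarrow> t = nat ((int s - int i) mod int m)"
      using that by (simp add: eq_nat_mod_iff_dvd)
    finally show ?thesis .
  qed
  moreover have "nat ((int s - int i) mod int m) < m"
    using assms by (simp add: nat_less_iff)
  ultimately show ?thesis
    by (simp add: diagonal_sum_def coeff_sum coeff_exp_part cong: if_cong)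
qed

lemma coeff_ore_mult_diagonal_sum:
  fixes s n :: nat
  assumes "m > 0"
  defines "j \<equiv> nat ((int s - int n) mod int m)"
  shows "coeff (ore_mult (diagonal_sum m s T) L) n
    = coeff (\<Sum>t<m. ore_mult (T t) (exp_part m (nat ((int t - int j) mod int m)) L)) n"
proof -
  have class_iff: "(n - i) mod m = nat ((int t - int j) mod int m) \<longleftrightarrow> t = nat ((int s - int i) mod int m)"
    if "i \<le> n" "t < m" for i t
  proof -
    have "(n - i) mod m = nat ((int t - int j) mod int m)
        \<longleftrightarrow> int m dvd int ((n - i) mod m) - (int t - int j)"
      using assms(1) by (simp add: eq_nat_mod_iff_dvd)
    also have "\<dots> \<longleftrightarrow> int m dvd int (n - i) - (int t - (int s - int n))"
      using assms(1) unfolding j_def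
      by (simp only: int_nat_eq pos_mod_sign of_nat_0_less_iff if_True of_nat_mod
          mod_eq_dvd_iff[symmetric] mod_mod_trivial mod_diff_right_eq)
    also have "\<dots> \<longleftrightarrow> int m dvd int t - (int s - int i)"
      using \<open>i \<le> n\<close> by (simp add: of_nat_diff) (smt (verit) dvd_minus_iff)
    also have "\<dots> \<longleftrightarrow> t = nat ((int s - int i) mod int m)"
      using \<open>t < m\<close> by (simp add: eq_nat_mod_iff_dvd)
    finally show ?thesis .
  qed
  have "coeff (\<Sum>t<m. ore_mult (T t) (exp_part m (nat ((int t - int j) mod int m)) L)) n
      = (\<Sum>i\<le>n. \<Sum>t<m. coeff (T t) i * (rshift ^^ i)
          (if (n - i) mod m = nat ((int t - int j) mod int m) then coeff L (n - i) else 0))"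
    by (simp add: coeff_sum coeff_ore_mult coeff_exp_part sum.swap[where A = "{..<m}"])
  also have "\<dots> = (\<Sum>i\<le>n. \<Sum>t<m. if t = nat ((int s - int i) mod int m)
      then coeff (T t) i * (rshift ^^ i) (coeff L (n - i)) else 0)"
    by (intro sum.cong refl) (simp add: class_iff)
  also have "\<dots> = coeff (ore_mult (diagonal_sum m s T) L) n"
    using assms(1) by (simp add: coeff_ore_mult coeff_diagonal_sum nat_less_iff)
  finally show ?thesis by simp
qed

theorem proposition4p2:
  fixes L :: "'k::field_char_0 poly fract poly"
    and T :: "nat \<Rightarrow> 'k poly fract poly"
    and m :: nat
  assumes "m > 0"
    and "L \<noteq> 0"
    and "\<forall>j<m. (\<Sum>i<m. ore_mult (T i) (exp_part m (nat ((int i - int j) mod int m)) L)) = 0"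
  shows "\<forall>k<m. T k = 0"
proof -
  have "ore_mult (diagonal_sum m s T) L = 0" for s
  proof (rule poly_eqI)
    fix n
    have j_lt: "nat ((int s - int n) mod int m) < m"
      using \<open>m > 0\<close> by (simp add: nat_less_iff)
    show "coeff (ore_mult (diagonal_sum m s T) L) n = coeff 0 n"
      unfolding coeff_ore_mult_diagonal_sum[OF \<open>m > 0\<close>] by (simp only: assms(3)[rule_format, OF j_lt] coeff_0)
  qed
  then have "diagonal_sum m s T = 0" for s
    using ore_mult_neq_0 \<open>L \<noteq> 0\<close> by blast
  then have "coeff (T k) i = 0" if "k < m" for k i
    using coeff_diagonal_sum[OF \<open>m > 0\<close>, of "k + i" T i] that by simp
  then show ?thesis by (simp add: poly_eq_iff)
qed

end
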